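(* Let $A\in\mathbb{R}^{n\times n}$ be symmetric, let $1\le K<n$, let $\lambda>0$, and let $g\in\mathcal{G}$ with Lipschitz constant $\ell>0$ for $g'$. Set $\rho=3\lambda\ell$ and run the ADMM iteration described in the context from symmetric initial matrices $Y_0,\Lambda_0$. Let $(X^*,Y^*,\Lambda^* )$ be a limit point (the limit of some subsequence) of $\{(X_k,Y_k,\Lambda_k)\}_{k\ge 0}$, and suppose the symmetric matrix $W^*=2A+\rho Y^*-\Lambda^*$ has distinct $K$-th and $(K+1)$-th largest eigenvalues. Let $U^*\in\mathbb{R}^{n\times K}$ have orthonormal columns that are eigenvectors of $W^*$ associated with its $K$ largest eigenvalues. Then $X^*=Y^*=U^*{U^*}^T$, and the KKT conditions of problem $\min_{X\in\mathcal{P}_K}\|A-X\|_F^2+\lambda\sum_{i,j}g(X_{ij})$ hold at $X^*$: $$(2A-\lambda G^* )U^*=U^*\Lambda_d,\qquad {U^*}^TU^*=I_K,$$ for some diagonal matrix $\Lambda_d\in\mathbb{R}^{K\times K}$, where $G^*\in\mathbb{R}^{n\times n}$ is defined by $G^*_{ij}=g'(X^*_{ij})$.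
   Context: $\mathcal{P}_K$ denotes the set of real symmetric $n\times n$ matrices $X$ with $X^2=X$ and $\mathrm{rank}(X)=K$ (rank-$K$ orthogonal projection matrices). $\mathcal{G}$ is the class of functions $g:\mathbb{R}\to\mathbb{R}$ that are continuously differentiable, nonnegative, convex, and whose derivative is Lipschitz: $|g'(x_1)-g'(x_2)|\le \ell|x_1-x_2|$ for all $x_1,x_2$. For matrices, $\langle M,N\rangle=\mathrm{trace}(M^TN)$ and $\|\cdot\|_F$ is the Frobenius norm. The augmented Lagrangian is $$\mathcal{L}_\rho(X,Y,\Lambda)=\|A-X\|_F^2+\lambda\sum_{i,j}g(Y_{ij})+\frac{\rho}{2}\|X-Y\|_F^2+\langle\Lambda,X-Y\rangle .$$ The ADMM iteration is: given $(Y_k,\Lambda_k)$, let $X_{k+1}\in\arg\min_{X\in\mathcal{P}_K}\mathcal{L}_\rho(X,Y_k,\Lambda_k)$, taken to be $\widehat U\widehat U^T$ where the columns of $\widehat U$ are orthonormal eigenvectors for the $K$ largest eigenvalues of $W_k=2A+\rho Y_k-\Lambda_k$; then $Y_{k+1}=\arg\min_{Y\in\mathbb{R}^{n\times n}}\mathcal{L}_\rho(X_{k+1},Y,\Lambda_k)$ (unique, by strong convexity); then $\Lambda_{k+1}=\Lambda_k+\rho(X_{k+1}-Y_{k+1})$. *)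

theory Defs
  imports "HOL-Analysis.Analysis" "HOL-Library.Multiset"
begin

definition sym_mat :: "real^'n^'n \<Rightarrow> bool" where
  "sym_mat M \<longleftrightarrow> transpose M = M"

definition frob_inner :: "real^'n^'m \<Rightarrow> real^'n^'m \<Rightarrow> real" where
  "frob_inner M N = (\<Sum>i\<in>UNIV. \<Sum>j\<in>UNIV. M$i$j * N$i$j)"

definition frob_norm_sq :: "real^'n^'m \<Rightarrow> real" where
  "frob_norm_sq M = (\<Sum>i\<in>UNIV. \<Sum>j\<in>UNIV. (M$i$j)^2)"

definition in_class_G :: "(real \<Rightarrow> real) \<Rightarrow> (real \<Rightarrow> real) \<Rightarrow> real \<Rightarrow> bool" where
  "in_class_G g gd l \<longleftrightarrow>
     (\<forall>x. (g has_real_derivative gd x) (at x)) \<and> continuous_on UNIV gd \<and>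
     (\<forall>x. 0 \<le> g x) \<and> convex_on UNIV g \<and>
     (\<forall>x1 x2. \<bar>gd x1 - gd x2\<bar> \<le> l * \<bar>x1 - x2\<bar>)"

definition aug_lag ::
  "real^'n^'n \<Rightarrow> real \<Rightarrow> (real \<Rightarrow> real) \<Rightarrow> real \<Rightarrow> real^'n^'n \<Rightarrow> real^'n^'n \<Rightarrow> real^'n^'n \<Rightarrow> real" where
  "aug_lag A lam g rho X Y Lam =
     frob_norm_sq (A - X) + lam * (\<Sum>i\<in>UNIV. \<Sum>j\<in>UNIV. g (Y$i$j))
     + rho / 2 * frob_norm_sq (X - Y) + frob_inner Lam (X - Y)"

text \<open>Number of eigenvalues (with multiplicity) of a symmetric matrix that are \<ge> t:
  dimension of the span of all eigenvectors with eigenvalue \<ge> t.\<close>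
definition eig_count_ge :: "real^'n^'n \<Rightarrow> real \<Rightarrow> nat" where
  "eig_count_ge W t = dim {v. \<exists>mu. t \<le> mu \<and> W *v v = mu *\<^sub>R v}"

text \<open>k-th largest eigenvalue (k \<ge> 1, counted with multiplicity) of a symmetric matrix.\<close>
definition kth_eig :: "real^'n^'n \<Rightarrow> nat \<Rightarrow> real" where
  "kth_eig W k = Sup {t. k \<le> eig_count_ge W t}"

definition top_eigvecs :: "real^'n^'n \<Rightarrow> real^'k^'n \<Rightarrow> bool" where
  "top_eigvecs W U \<longleftrightarrow>
     transpose U ** U = mat 1 \<and>
     (\<exists>mu :: 'k \<Rightarrow> real.
        (\<forall>j. W *v column j U = mu j *\<^sub>R column j U) \<and>
        image_mset mu (mset_set UNIV) = mset (map (kth_eig W) [1..<CARD('k) + 1]))"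

definition diag_mat :: "real^'k^'k \<Rightarrow> bool" where
  "diag_mat D \<longleftrightarrow> (\<forall>i j. i \<noteq> j \<longrightarrow> D$i$j = 0)"

end

theory Submission
  imports Defs
begin

text \<open>The X-step maximises \<open>\<langle>W\<^sub>k, P\<rangle>\<close> over rank-\<open>K\<close> projections \<open>P\<close>
  (Ky Fan), and the first-order condition of the Y-step gives \<open>\<Lambda>\<^sub>k\<^sub>+\<^sub>1 = \<lambda> g'(Y\<^sub>k\<^sub>+\<^sub>1)\<close>
  entrywise, so \<open>\<parallel>\<Delta>\<Lambda>\<parallel> \<le> \<lambda>\<ell> \<parallel>\<Delta>Y\<parallel>\<close>. With \<open>\<rho> = 3\<lambda>\<ell>\<close> the augmented Lagrangian therefore
  decreases by \<open>7/6 \<lambda>\<ell> \<parallel>\<Delta>Y\<parallel>\<^sup>2\<close> per iteration; as it is bounded below along the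
  subsequence, \<open>\<Delta>Y\<close>, \<open>\<Delta>\<Lambda>\<close> and \<open>X - Y\<close> tend to zero. In the limit \<open>Y\<^sup>*\<close> is a rank-\<open>K\<close>
  projection that is as good for \<open>W\<^sup>*\<close> as \<open>U\<^sup>*U\<^sup>*\<^sup>T\<close>, which the spectral gap makes the unique
  maximiser; and \<open>\<Lambda>\<^sup>* = \<lambda>G\<^sup>*\<close> turns \<open>W\<^sup>*U\<^sup>* = U\<^sup>* diag(\<mu>)\<close> into the KKT equation.\<close>

section \<open>Orthonormal columns and projections\<close>

lemma frob_inner_eq_inner: "frob_inner M N = M \<bullet> N"
  by (simp add: frob_inner_def inner_vec_def)

lemma frob_norm_sq_eq_inner: "frob_norm_sq M = M \<bullet> M"
  by (simp add: frob_norm_sq_def inner_vec_def power2_eq_square)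

lemma sym_mat_iff_nth: "sym_mat M \<longleftrightarrow> (\<forall>i j. M$i$j = M$j$i)"
  by (auto simp: sym_mat_def vec_eq_iff transpose_def)

lemma matrix_mult_column_nth: "(M ** U) $ a $ j = (M *v column j U) $ a"
  unfolding matrix_matrix_mult_def matrix_vector_mult_def by (simp add: column_def)

lemma inner_matrix_vector_sym:
  assumes "transpose W = W"
  shows "x \<bullet> (W *v y) = (W *v x) \<bullet> (y::real^'n)"
proof -
  have "x \<bullet> (W *v y) = (x v* W) \<bullet> y" by (simp add: dot_lmul_matrix)
  also have "x v* W = W *v x" using vector_transpose_matrix[of x W] assms by simp
  finally show ?thesis .
qed

lemma transpose_mult_self_nth: "(transpose U ** U) $ i $ j = column i U \<bullet> column j (U::real^'k^'n)"
  unfolding matrix_matrix_mult_def inner_vec_def by (simp add: transpose_def column_def)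

lemma orthonormal_columns_inner:
  "transpose U ** U = mat 1 \<Longrightarrow> column i U \<bullet> column j (U::real^'k^'n) = (if i = j then 1 else 0)"
  using transpose_mult_self_nth[of U i j] by (simp add: mat_def)

lemma mult_transpose_self_nth: "(U ** transpose U) $ a $ b = (\<Sum>j\<in>UNIV. U$a$j * U$b$j)"
  unfolding matrix_matrix_mult_def by (simp add: transpose_def)

lemma inner_mult_transpose_self:
  "(M::real^'n^'n) \<bullet> (U ** transpose (U::real^'k^'n)) = (\<Sum>j\<in>UNIV. column j U \<bullet> (M *v column j U))"
proof -
  have "M \<bullet> (U ** transpose U) = (\<Sum>a\<in>UNIV. \<Sum>b\<in>UNIV. \<Sum>j\<in>UNIV. M$a$b * (U$a$j * U$b$j))"
    unfolding inner_vec_def mult_transpose_self_nth by (simp add: sum_distrib_left)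
  also have "\<dots> = (\<Sum>a\<in>UNIV. \<Sum>j\<in>UNIV. \<Sum>b\<in>UNIV. M$a$b * (U$a$j * U$b$j))"
    by (rule sum.cong[OF refl], rule sum.swap)
  also have "\<dots> = (\<Sum>j\<in>UNIV. \<Sum>a\<in>UNIV. \<Sum>b\<in>UNIV. M$a$b * (U$a$j * U$b$j))"
    by (rule sum.swap)
  also have "\<dots> = (\<Sum>j\<in>UNIV. column j U \<bullet> (M *v column j U))"
    unfolding inner_vec_def matrix_vector_mult_def
    by (simp add: column_def sum_distrib_left mult_ac)
  finally show ?thesis .
qed

definition col_proj :: "real^'k^'n \<Rightarrow> real^'n \<Rightarrow> real^'n" where
  "col_proj U v = (\<Sum>j\<in>UNIV. (column j U \<bullet> v) *\<^sub>R column j U)"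

lemma mult_transpose_self_mult_vector: "(U ** transpose U) *v v = col_proj U v"
proof -
  have "((U ** transpose U) *v v) $ a = col_proj U v $ a" for a
  proof -
    have "((U ** transpose U) *v v) $ a = (\<Sum>b\<in>UNIV. \<Sum>j\<in>UNIV. U$a$j * U$b$j * v$b)"
      unfolding matrix_vector_mult_def mult_transpose_self_nth by (simp add: sum_distrib_right)
    also have "\<dots> = (\<Sum>j\<in>UNIV. \<Sum>b\<in>UNIV. U$a$j * U$b$j * v$b)" by (rule sum.swap)
    also have "\<dots> = col_proj U v $ a"
      unfolding col_proj_def inner_vec_def
      by (simp add: column_def sum_distrib_left sum_distrib_right mult_ac)
    finally show ?thesis .
  qed
  then show ?thesis by (simp add: vec_eq_iff)
qed

lemma column_inner_col_proj:
  assumes "transpose U ** U = mat 1"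
  shows "column k U \<bullet> col_proj U v = column k U \<bullet> v"
proof -
  have "column k U \<bullet> col_proj U v = (\<Sum>j\<in>UNIV. (column j U \<bullet> v) * (if k = j then 1 else 0))"
    by (simp add: col_proj_def inner_sum_right orthonormal_columns_inner[OF assms])
  also have "\<dots> = column k U \<bullet> v" by (simp add: if_distrib cong: if_cong)
  finally show ?thesis .
qed

lemma col_proj_column:
  fixes U :: "real^'k^'n"
  assumes "transpose U ** U = mat 1"
  shows "col_proj U (column j U) = column j U"
proof -
  have "col_proj U (column j U) = (\<Sum>t\<in>UNIV. if t = j then column t U else 0)"
    unfolding col_proj_def by (rule sum.cong) (simp_all add: orthonormal_columns_inner[OF assms])
  then show ?thesis by simp
qed

lemma column_inner_col_proj_residual:
  "transpose U ** U = mat 1 \<Longrightarrow> column k U \<bullet> (v - col_proj U v) = 0"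
  by (simp add: inner_diff_right column_inner_col_proj)

lemma col_proj_residual_inner_self:
  assumes "transpose U ** U = mat 1"
  shows "(v - col_proj U v) \<bullet> (v - col_proj U v) = v \<bullet> v - (\<Sum>j\<in>UNIV. (column j U \<bullet> v)^2)"
proof -
  define q where "q = v - col_proj U v"
  have "col_proj U v \<bullet> q = 0"
    unfolding col_proj_def[of U v]
    by (simp add: inner_sum_left q_def column_inner_col_proj_residual[OF assms])
  then have "q \<bullet> q = v \<bullet> q" by (simp add: q_def inner_diff_left)
  also have "\<dots> = v \<bullet> v - (\<Sum>j\<in>UNIV. (column j U \<bullet> v)^2)"
    by (simp add: q_def col_proj_def inner_diff_right inner_sum_right power2_eq_square inner_commute)
  finally show ?thesis unfolding q_def .
qed

lemma bessel_inequality: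
  fixes V :: "real^'k^'n"
  shows "transpose V ** V = mat 1 \<Longrightarrow> (\<Sum>i\<in>UNIV. (column i V \<bullet> u)^2) \<le> u \<bullet> u"
  using inner_ge_zero[of "u - col_proj V u"] by (simp add: col_proj_residual_inner_self)

lemma projection_inner_self:
  fixes V :: "real^'k^'n"
  assumes "transpose V ** V = mat 1"
  shows "(V ** transpose V) \<bullet> (V ** transpose V) = real CARD('k)"
proof -
  have "(V ** transpose V) \<bullet> (V ** transpose V) = (\<Sum>i\<in>UNIV. column i V \<bullet> col_proj V (column i V))"
    by (simp add: inner_mult_transpose_self mult_transpose_self_mult_vector)
  also have "\<dots> = (\<Sum>i\<in>(UNIV::'k set). 1)"
    by (simp add: column_inner_col_proj[OF assms] orthonormal_columns_inner[OF assms])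
  finally show ?thesis by simp
qed

section \<open>Ky Fan's maximum principle\<close>

lemma quadratic_form_le_split:
  fixes W :: "real^'n^'n" and U :: "real^'k^'n"
  assumes symW: "transpose W = W" and oU: "transpose U ** U = mat 1"
    and eig: "\<And>j. W *v column j U = mu j *\<^sub>R column j U"
    and compl: "\<And>x. (\<forall>j. column j U \<bullet> x = 0) \<Longrightarrow> x \<bullet> (W *v x) \<le> c * (x \<bullet> x)"
  shows "v \<bullet> (W *v v) \<le> (\<Sum>j\<in>UNIV. mu j * (column j U \<bullet> v)^2)
                        + c * (v \<bullet> v - (\<Sum>j\<in>UNIV. (column j U \<bullet> v)^2))"
proof -
  define p where "p = col_proj U v"
  define q where "q = v - p"
  have Wp: "W *v p = (\<Sum>j\<in>UNIV. ((column j U \<bullet> v) * mu j) *\<^sub>R column j U)"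
    unfolding p_def col_proj_def
    by (simp add: linear_sum[OF matrix_vector_mul_linear] o_def matrix_vector_mult_scaleR eig)
  have q_perp: "\<forall>j. column j U \<bullet> q = 0"
    unfolding q_def p_def using column_inner_col_proj_residual[OF oU] by blast
  have v_pq: "v = p + q" by (simp add: q_def)
  have "(W *v p) \<bullet> q = 0" unfolding Wp by (simp add: inner_sum_left q_perp)
  then have "p \<bullet> (W *v q) = 0" by (simp add: inner_matrix_vector_sym[OF symW])
  then have "v \<bullet> (W *v q) = q \<bullet> (W *v q)" by (subst v_pq) (simp add: inner_add_left)
  moreover have "v \<bullet> (W *v p) = (\<Sum>j\<in>UNIV. mu j * (column j U \<bullet> v)^2)"
    unfolding Wp by (simp add: inner_sum_right power2_eq_square inner_commute mult_ac)
  moreover have "v \<bullet> (W *v v) = v \<bullet> (W *v p) + v \<bullet> (W *v q)"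
    by (subst (2) v_pq) (simp add: matrix_vector_right_distrib inner_add_right)
  moreover have "q \<bullet> q = v \<bullet> v - (\<Sum>j\<in>UNIV. (column j U \<bullet> v)^2)"
    unfolding q_def p_def by (rule col_proj_residual_inner_self[OF oU])
  ultimately show ?thesis using compl[OF q_perp] by simp
qed

text \<open>The factor of \<open>d\<close> is half the squared Frobenius distance between the projections
  \<open>U U\<^sup>T\<close> and \<open>V V\<^sup>T\<close>.\<close>
lemma ky_fan_gap:
  fixes W :: "real^'n^'n" and U V :: "real^'k^'n"
  assumes symW: "transpose W = W"
    and oU: "transpose U ** U = mat 1" and oV: "transpose V ** V = mat 1"
    and eig: "\<And>j. W *v column j U = mu j *\<^sub>R column j U"
    and compl: "\<And>x. (\<forall>j. column j U \<bullet> x = 0) \<Longrightarrow> x \<bullet> (W *v x) \<le> c * (x \<bullet> x)"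
    and gap: "\<And>j. c + d \<le> mu j"
  shows "W \<bullet> (V ** transpose V) + d * (real CARD('k) - (U ** transpose U) \<bullet> (V ** transpose V))
          \<le> W \<bullet> (U ** transpose U)"
proof -
  define a where "a j = (\<Sum>i\<in>UNIV. (column j U \<bullet> column i V)^2)" for j
  have a_le_1: "a j \<le> 1" for j
    using bessel_inequality[OF oV, of "column j U"] orthonormal_columns_inner[OF oU, of j j]
    by (simp add: a_def inner_commute)
  have swap: "(\<Sum>i\<in>UNIV. \<Sum>j\<in>UNIV. f j * (column j U \<bullet> column i V)^2) = (\<Sum>j\<in>UNIV. f j * a j)"
    for f :: "'k \<Rightarrow> real"
    unfolding a_def sum_distrib_left by (rule sum.swap)
  have swap1: "(\<Sum>i\<in>UNIV. \<Sum>j\<in>UNIV. (column j U \<bullet> column i V)^2) = sum a UNIV"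
    unfolding a_def by (rule sum.swap)
  have "W \<bullet> (V ** transpose V) = (\<Sum>i\<in>UNIV. column i V \<bullet> (W *v column i V))"
    by (rule inner_mult_transpose_self)
  also have "\<dots> \<le> (\<Sum>i\<in>UNIV. (\<Sum>j\<in>UNIV. mu j * (column j U \<bullet> column i V)^2)
                   + c * (1 - (\<Sum>j\<in>UNIV. (column j U \<bullet> column i V)^2)))"
  proof (rule sum_mono)
    fix i
    show "column i V \<bullet> (W *v column i V) \<le> (\<Sum>j\<in>UNIV. mu j * (column j U \<bullet> column i V)^2)
            + c * (1 - (\<Sum>j\<in>UNIV. (column j U \<bullet> column i V)^2))"
      using quadratic_form_le_split[OF symW oU eig compl, of "column i V"]
        orthonormal_columns_inner[OF oV, of i i]
      by simp
  qed
  also have "\<dots> = (\<Sum>j\<in>UNIV. mu j * a j) + c * (real CARD('k) - sum a UNIV)"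
    by (simp add: swap swap1 sum.distrib sum_subtractf right_diff_distrib sum_distrib_left[symmetric])
  finally have W_V: "W \<bullet> (V ** transpose V) \<le> (\<Sum>j\<in>UNIV. mu j * a j) + c * (real CARD('k) - sum a UNIV)" .
  have U_V: "(U ** transpose U) \<bullet> (V ** transpose V) = sum a UNIV"
    using swap1
    by (simp add: inner_mult_transpose_self mult_transpose_self_mult_vector col_proj_def
                  inner_sum_right power2_eq_square inner_commute)
  have W_U: "W \<bullet> (U ** transpose U) = (\<Sum>j\<in>UNIV. mu j)"
    by (simp add: inner_mult_transpose_self eig orthonormal_columns_inner[OF oU])
  have "0 \<le> (\<Sum>j\<in>UNIV. (mu j - c - d) * (1 - a j))"
    using a_le_1 gap by (intro sum_nonneg mult_nonneg_nonneg) (auto simp: algebra_simps)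
  also have "\<dots> = (\<Sum>j\<in>UNIV. mu j) - ((\<Sum>j\<in>UNIV. mu j * a j) + (c + d) * (real CARD('k) - sum a UNIV))"
    by (simp add: sum_subtractf sum_distrib_left algebra_simps sum.distrib)
  finally show ?thesis using W_V U_V W_U by (simp add: algebra_simps)
qed

section \<open>Rayleigh quotients and eigenvalue counting\<close>

lemma exists_nonzero_orthogonal_to_columns:
  fixes U :: "real^'k^'n"
  assumes oU: "transpose U ** U = mat 1" and Kn: "CARD('k) < CARD('n)"
  obtains y where "y \<noteq> 0" "\<forall>j. column j U \<bullet> y = 0"
proof -
  define C where "C = range (\<lambda>j. column j U)"
  have "dim (span C) \<le> card C" unfolding dim_span
    by (rule dim_le_card) (auto simp: C_def span_base)
  also have "card C \<le> CARD('k)" unfolding C_def by (rule card_image_le) simp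
  finally have "dim (span C) < dim (UNIV :: (real^'n) set)" using Kn by simp
  then have "span C \<noteq> UNIV" by (metis less_irrefl)
  then obtain x where x: "x \<notin> span C" by auto
  have "col_proj U x \<in> span C"
    unfolding col_proj_def by (intro span_sum span_mul span_base) (auto simp: C_def)
  then have "x - col_proj U x \<noteq> 0" using x by auto
  then show ?thesis using that column_inner_col_proj_residual[OF oU] by blast
qed

lemma linear_coeff_zero_if_quadratic_nonpos:
  fixes a b :: real
  assumes "\<And>s. 2 * s * b + s^2 * a \<le> 0"
  shows "b = 0"
proof -
  define e where "e = \<bar>a\<bar> + 1"
  have e: "e > 0" by (simp add: e_def)
  have "e^2 * (2 * (b/e) * b + (b/e)^2 * a) \<le> 0"
    using assms[of "b/e"] by (simp add: mult_nonneg_nonpos)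
  also have "e^2 * (2 * (b/e) * b + (b/e)^2 * a) = b^2 * (2*e + a)"
    using e by (simp add: field_simps power2_eq_square)
  finally have "b^2 * (2*e + a) \<le> 0" .
  moreover have "2*e + a > 0" unfolding e_def by (cases "a \<ge> 0") simp_all
  ultimately show ?thesis by (simp add: mult_le_0_iff)
qed

lemma rayleigh_max_on_orthogonal_complement:
  fixes W :: "real^'n^'n" and U :: "real^'k^'n"
  assumes oU: "transpose U ** U = mat 1" and Kn: "CARD('k) < CARD('n)"
  obtains x0 where "\<forall>j. column j U \<bullet> x0 = 0" "x0 \<bullet> x0 = 1"
    "\<And>x. \<forall>j. column j U \<bullet> x = 0 \<Longrightarrow> x \<bullet> (W *v x) \<le> (x0 \<bullet> (W *v x0)) * (x \<bullet> x)"
proof -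
  define S where "S = {x. \<forall>j. column j U \<bullet> x = (0::real)}"
  define f where "f x = x \<bullet> (W *v x)" for x
  have "closed S"
    unfolding S_def Collect_all_eq by (intro closed_INT closed_hyperplane ballI)
  then have compact: "compact (sphere 0 1 \<inter> S)" by (rule compact_Int_closed[OF compact_sphere])
  obtain y where y: "y \<noteq> 0" "y \<in> S" using exists_nonzero_orthogonal_to_columns[OF oU Kn] S_def by blast
  then have "y /\<^sub>R norm y \<in> sphere 0 1 \<inter> S" by (simp add: S_def)
  then have nonempty: "sphere 0 1 \<inter> S \<noteq> {}" by blast
  have "continuous_on (sphere 0 1 \<inter> S) f"
    unfolding f_def by (intro continuous_intros linear_continuous_on matrix_vector_mul_bounded_linear)
  then obtain x0 where x0: "x0 \<in> sphere 0 1 \<inter> S" and max: "\<And>z. z \<in> sphere 0 1 \<inter> S \<Longrightarrow> f z \<le> f x0"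
    using continuous_attains_sup[OF compact nonempty] by blast
  have "f z \<le> f x0 * (z \<bullet> z)" if "z \<in> S" "z \<noteq> 0" for z
  proof -
    have "z /\<^sub>R norm z \<in> sphere 0 1 \<inter> S" using that by (simp add: S_def)
    moreover have "f (z /\<^sub>R norm z) = f z / (norm z)^2"
      by (simp add: f_def matrix_vector_mult_scaleR power2_eq_square divide_inverse mult_ac)
    ultimately have "f z / (norm z)^2 \<le> f x0" using max by fastforce
    then show ?thesis using that(2) by (simp add: divide_le_eq dot_square_norm mult.commute)
  qed
  then show ?thesis
    using that[of x0] x0 by (fastforce simp: S_def f_def dot_square_norm)
qed

text \<open>The complement is \<open>W\<close>-invariant, so the first-order condition of the constrained
  maximum is the eigenvalue equation.\<close>
lemma rayleigh_maximizer_eigenvector: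
  fixes W :: "real^'n^'n" and U :: "real^'k^'n"
  assumes symW: "transpose W = W"
    and eig: "\<And>j. W *v column j U = mu j *\<^sub>R column j U"
    and x0_perp: "\<forall>j. column j U \<bullet> x0 = 0" and x0_unit: "x0 \<bullet> x0 = 1"
    and max: "\<And>x. \<forall>j. column j U \<bullet> x = 0 \<Longrightarrow> x \<bullet> (W *v x) \<le> m * (x \<bullet> x)"
    and m_def: "m = x0 \<bullet> (W *v x0)"
  shows "W *v x0 = m *\<^sub>R x0"
proof -
  have first_order: "y \<bullet> (W *v x0) - m * (y \<bullet> x0) = 0" if y_perp: "\<forall>j. column j U \<bullet> y = 0" for y
  proof (rule linear_coeff_zero_if_quadratic_nonpos[where a = "y \<bullet> (W *v y) - m * (y \<bullet> y)"])
    fix s :: real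
    have "(x0 + s *\<^sub>R y) \<bullet> (W *v (x0 + s *\<^sub>R y)) \<le> m * ((x0 + s *\<^sub>R y) \<bullet> (x0 + s *\<^sub>R y))"
      using x0_perp y_perp by (intro max) (simp add: inner_add_right)
    moreover have "x0 \<bullet> (W *v y) = y \<bullet> (W *v x0)"
      using inner_matrix_vector_sym[OF symW, of x0 y] by (simp add: inner_commute)
    ultimately show "2 * s * (y \<bullet> (W *v x0) - m * (y \<bullet> x0)) + s^2 * (y \<bullet> (W *v y) - m * (y \<bullet> y)) \<le> 0"
      using x0_unit
      by (simp add: m_def matrix_vector_right_distrib matrix_vector_mult_scaleR inner_add_left
          inner_add_right power2_eq_square inner_commute algebra_simps)
  qed
  define z where "z = W *v x0 - m *\<^sub>R x0"
  have "column j U \<bullet> (W *v x0) = 0" for j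
    using inner_matrix_vector_sym[OF symW, of "column j U" x0] x0_perp by (simp add: eig inner_commute)
  then have "\<forall>j. column j U \<bullet> z = 0" using x0_perp by (simp add: z_def inner_diff_right)
  then have "z \<bullet> z = 0" using first_order by (simp add: z_def inner_diff_right)
  then show ?thesis by (simp add: z_def)
qed

lemma bdd_above_eig_count_ge:
  fixes W :: "real^'n^'n"
  assumes "1 \<le> k"
  shows "bdd_above {t. k \<le> eig_count_ge W t}"
proof -
  obtain B where B: "\<And>x. norm (W *v x) \<le> B * norm x"
    using linear_bounded_pos[OF matrix_vector_mul_linear] by blast
  have eig_le: "mu \<le> B" if "v \<noteq> 0" "W *v v = mu *\<^sub>R v" for v mu
    using B[of v] that by simp
  have "t \<le> B" if "k \<le> eig_count_ge W t" for t
  proof (rule ccontr)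
    assume "\<not> t \<le> B"
    then have "{v. \<exists>mu. t \<le> mu \<and> W *v v = mu *\<^sub>R v} \<subseteq> span {}"
      using eig_le by force
    from dim_le_card[OF this finite.emptyI] have "eig_count_ge W t = 0"
      by (simp add: eig_count_ge_def)
    then show False using that assms by simp
  qed
  then show ?thesis by (intro bdd_aboveI[of _ B]) auto
qed

lemma card_le_eig_count_ge:
  fixes W :: "real^'n^'n"
  assumes "B \<subseteq> {v. \<exists>mu. t \<le> mu \<and> W *v v = mu *\<^sub>R v}" "pairwise orthogonal B" "0 \<notin> B"
  shows "card B \<le> eig_count_ge W t"
  unfolding eig_count_ge_def
  by (rule independent_card_le_dim[OF assms(1) pairwise_orthogonal_independent[OF assms(2,3)]])

lemma le_kth_eig: "1 \<le> i \<Longrightarrow> i \<le> eig_count_ge W t \<Longrightarrow> t \<le> kth_eig W i"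
  unfolding kth_eig_def by (rule cSup_upper) (auto intro: bdd_above_eig_count_ge)

lemma kth_eig_antimono:
  assumes "1 \<le> i" "i \<le> j" "j \<le> eig_count_ge W t"
  shows "kth_eig W j \<le> kth_eig W i"
  unfolding kth_eig_def
  using assms by (intro cSup_subset_mono bdd_above_eig_count_ge) auto

lemma eig_count_ge_columns_insert:
  fixes W :: "real^'n^'n" and U :: "real^'k^'n"
  assumes oU: "transpose U ** U = mat 1"
    and eig: "\<And>j. W *v column j U = mu j *\<^sub>R column j U"
    and x0_perp: "\<forall>j. column j U \<bullet> x0 = 0" and x0_unit: "x0 \<bullet> x0 = 1"
    and x0_eig: "W *v x0 = m *\<^sub>R x0"
    and "t \<le> m" "\<forall>j\<in>J. t \<le> mu j"
  shows "card J + 1 \<le> eig_count_ge W t"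
proof -
  define B where "B = insert x0 ((\<lambda>j. column j U) ` J)"
  note uu = orthonormal_columns_inner[OF oU]
  have "x0 \<notin> (\<lambda>j. column j U) ` J"
  proof
    assume "x0 \<in> (\<lambda>j. column j U) ` J"
    then obtain j where "x0 = column j U" by blast
    then show False using x0_perp x0_unit uu[of j j] by simp
  qed
  moreover have "inj_on (\<lambda>j. column j U) J"
  proof (rule inj_onI)
    fix i j assume "column i U = column j U"
    then show "i = j" using uu[of i j] uu[of j j] by (simp split: if_splits)
  qed
  ultimately have "card B = card J + 1" by (simp add: B_def card_image)
  moreover have "B \<subseteq> {v. \<exists>mu. t \<le> mu \<and> W *v v = mu *\<^sub>R v}"
    unfolding B_def using assms(6,7) x0_eig eig by auto
  moreover have "pairwise orthogonal B"
    unfolding B_def pairwise_def orthogonal_def using x0_perp uu by (auto simp: inner_commute)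
  moreover have "0 \<notin> B" unfolding B_def using x0_unit uu by (auto, metis inner_zero_left zero_neq_one)
  ultimately show ?thesis using card_le_eig_count_ge[of B t W] by simp
qed

lemma card_eq_of_image_mset_eq:
  fixes mu :: "'k::finite \<Rightarrow> 'a"
  assumes "image_mset mu (mset_set UNIV) = mset (map f xs)" "distinct xs"
  shows "card {j. P (mu j)} = card {i \<in> set xs. P (f i)}"
proof -
  have "card {j. P (mu j)} = size (filter_mset P (image_mset mu (mset_set UNIV)))"
    by (simp add: filter_mset_image_mset)
  also have "\<dots> = length (filter (P \<circ> f) xs)"
    unfolding assms(1) by (metis filter_map mset_filter size_mset length_map)
  also have "\<dots> = card {i \<in> set xs. P (f i)}"
    using distinct_length_filter[OF assms(2)] by (simp add: Int_commute Collect_conj_eq o_def)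
  finally show ?thesis .
qed

text \<open>If any level
  \<open>t \<le> m\<close> lying below the values of a subfamily \<open>J\<close> is at most \<open>f (|J| + 1)\<close>, then
  \<open>m \<le> f (K + 1)\<close>: otherwise take \<open>J\<close> the values above \<open>f (K + 1)\<close>, which are the first
  \<open>|J|\<close> values of \<open>f\<close>.\<close>
lemma le_next_sorted_value:
  fixes mu :: "'k::finite \<Rightarrow> real" and f :: "nat \<Rightarrow> real"
  assumes ms: "image_mset mu (mset_set UNIV) = mset (map f [1..<CARD('k) + 1])"
    and anti: "\<And>i j. 1 \<le> i \<Longrightarrow> i \<le> j \<Longrightarrow> j \<le> CARD('k) + 1 \<Longrightarrow> f j \<le> f i"
    and count: "\<And>J t. t \<le> m \<Longrightarrow> \<forall>j\<in>J. t \<le> mu j \<Longrightarrow> t \<le> f (card J + 1)"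
  shows "m \<le> f (CARD('k) + 1)"
proof (rule ccontr)
  define K where "K = CARD('k)"
  define c where "c = f (K + 1)"
  assume "\<not> m \<le> f (CARD('k) + 1)"
  then have m_gt: "c < m" by (simp add: c_def K_def)
  define J where "J = {j. c < mu j}"
  define R where "R = {i \<in> {1..<K+1}. c < f i}"
  have JR: "card J = card R"
    unfolding J_def R_def K_def using card_eq_of_image_mset_eq[OF ms distinct_upt, of "\<lambda>x. c < x"]
    by (simp only: set_upt)
  have "R \<subseteq> {1..K}" by (auto simp: R_def)
  then have R_le: "card R \<le> K" using card_mono[of "{1..K}" R] by simp
  have "f (card R + 1) \<le> c"
  proof (rule ccontr)
    assume "\<not> f (card R + 1) \<le> c"
    then have gt: "c < f (card R + 1)" by simp
    then have "card R + 1 \<le> K" using R_le by (cases "card R = K") (simp_all add: c_def)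
    have "{1..card R + 1} \<subseteq> R"
    proof
      fix i assume i: "i \<in> {1..card R + 1}"
      then have "f (card R + 1) \<le> f i" using anti[of i "card R + 1"] \<open>card R + 1 \<le> K\<close>
        by (simp add: K_def)
      then show "i \<in> R" using i gt \<open>card R + 1 \<le> K\<close> by (simp add: R_def)
    qed
    from card_mono[OF _ this] show False by (simp add: R_def)
  qed
  moreover define t where "t = Min (insert m (mu ` J))"
  have "c < t" unfolding t_def using m_gt by (auto simp: J_def)
  moreover have "t \<le> f (card J + 1)" by (rule count) (auto simp: t_def)
  ultimately show False using JR by simp
qed

text \<open>The maximal Rayleigh quotient on the complement of the columns is an eigenvalue whose
  eigenvector extends the columns to \<open>K + 1\<close> orthonormal eigenvectors; counting them bounds
  it by the \<open>(K + 1)\<close>-th eigenvalue.\<close>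
lemma top_eigvecs_spectral:
  fixes W :: "real^'n^'n" and U :: "real^'k^'n"
  assumes symW: "transpose W = W" and top: "top_eigvecs W U" and Kn: "CARD('k) < CARD('n)"
  obtains mu where "\<And>j. W *v column j U = mu j *\<^sub>R column j U"
    and "\<And>j. kth_eig W CARD('k) \<le> mu j"
    and "kth_eig W (CARD('k) + 1) \<le> kth_eig W CARD('k)"
    and "\<And>x. \<forall>j. column j U \<bullet> x = 0 \<Longrightarrow> x \<bullet> (W *v x) \<le> kth_eig W (CARD('k) + 1) * (x \<bullet> x)"
proof -
  define K where "K = CARD('k)"
  have oU: "transpose U ** U = mat 1" using top by (simp add: top_eigvecs_def)
  obtain mu where eig: "\<And>j. W *v column j U = mu j *\<^sub>R column j U"
    and ms: "image_mset mu (mset_set UNIV) = mset (map (kth_eig W) [1..<K + 1])"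
    using top unfolding top_eigvecs_def K_def by blast
  obtain x0 where x0_perp: "\<forall>j. column j U \<bullet> x0 = 0" and x0_unit: "x0 \<bullet> x0 = 1"
    and x0_max: "\<And>x. \<forall>j. column j U \<bullet> x = 0 \<Longrightarrow> x \<bullet> (W *v x) \<le> (x0 \<bullet> (W *v x0)) * (x \<bullet> x)"
    using rayleigh_max_on_orthogonal_complement[OF oU Kn] by blast
  define m where "m = x0 \<bullet> (W *v x0)"
  have x0_eig: "W *v x0 = m *\<^sub>R x0"
    using rayleigh_maximizer_eigenvector[OF symW eig x0_perp x0_unit x0_max] m_def by simp
  note count = eig_count_ge_columns_insert[OF oU eig x0_perp x0_unit x0_eig]
  have count_all: "card (UNIV::'k set) + 1 \<le> eig_count_ge W (min m (Min (range mu)))"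
    by (rule count) (auto simp: min.coboundedI2)
  have anti: "kth_eig W j \<le> kth_eig W i" if "1 \<le> i" "i \<le> j" "j \<le> K + 1" for i j
    using that count_all by (intro kth_eig_antimono[where t = "min m (Min (range mu))"]) (auto simp: K_def)
  have K_pos: "1 \<le> K" using Kn by (simp add: K_def Suc_le_eq)
  have mu_ge: "kth_eig W K \<le> mu j" for j
  proof -
    have "mu j \<in># mset (map (kth_eig W) [1..<K + 1])" unfolding ms[symmetric] by simp
    then obtain i where "i \<in> set [1..<K+1]" "mu j = kth_eig W i" by (auto simp only: set_map in_multiset_in_set)
    then show ?thesis using anti[of i K] by auto
  qed
  have below_count: "t \<le> kth_eig W (card J + 1)" if "t \<le> m" "\<forall>j\<in>J. t \<le> mu j" for t J
    using le_kth_eig[OF _ count[OF that]] by simp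
  have m_le: "m \<le> kth_eig W (K + 1)"
    using le_next_sorted_value[OF ms[unfolded K_def] anti[unfolded K_def] below_count] unfolding K_def .
  have "x \<bullet> (W *v x) \<le> kth_eig W (K + 1) * (x \<bullet> x)" if "\<forall>j. column j U \<bullet> x = 0" for x
    using x0_max[OF that] mult_right_mono[OF m_le inner_ge_zero[of x]] unfolding m_def by linarith
  moreover have "kth_eig W (K + 1) \<le> kth_eig W K" using anti[of K "K + 1"] K_pos by simp
  ultimately show ?thesis using that[OF eig] mu_ge unfolding K_def by blast
qed

definition entrywise :: "(real \<Rightarrow> real) \<Rightarrow> real^'n^'m \<Rightarrow> real^'n^'m" where
  "entrywise h M = (\<chi> i j. h (M$i$j))"

lemma tendsto_entrywise:
  assumes "\<And>x. isCont h x" and "Mf \<longlonglongrightarrow> M"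
  shows "(\<lambda>k. entrywise h (Mf k)) \<longlonglongrightarrow> entrywise h M"
  unfolding entrywise_def
  by (intro vec_tendstoI) (simp add: isCont_tendsto_compose[OF assms(1)] tendsto_vec_nth assms(2))

lemma power2_norm_eq_frob_norm_sq: "(norm M)^2 = frob_norm_sq M"
  by (simp add: power2_norm_eq_inner frob_norm_sq_eq_inner)

lemma norm_entrywise_diff_le:
  assumes lip: "\<And>a b. \<bar>h a - h b\<bar> \<le> l * \<bar>a - b\<bar>" and "l \<ge> 0"
  shows "norm (entrywise h M - entrywise h N) \<le> l * norm (M - N)"
proof (rule power2_le_imp_le)
  have "(h (M$a$b) - h (N$a$b))^2 \<le> l^2 * (M$a$b - N$a$b)^2" for a b
    using power_mono[OF lip[of "M$a$b" "N$a$b"] abs_ge_zero, of 2]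
    by (simp add: power_mult_distrib)
  then show "(norm (entrywise h M - entrywise h N))^2 \<le> (l * norm (M - N))^2"
    unfolding power_mult_distrib power2_norm_eq_frob_norm_sq frob_norm_sq_def
    by (simp add: entrywise_def sum_distrib_left sum_mono)
  show "0 \<le> l * norm (M - N)" using \<open>l \<ge> 0\<close> by simp
qed

lemma sym_mat_limit:
  assumes "Mf \<longlonglongrightarrow> M" "\<And>k. sym_mat (Mf k)"
  shows "sym_mat M"
  unfolding sym_mat_iff_nth
proof (intro allI)
  fix i j
  have "(\<lambda>k. Mf k $ i $ j) \<longlonglongrightarrow> M $ i $ j" "(\<lambda>k. Mf k $ j $ i) \<longlonglongrightarrow> M $ j $ i"
    by (intro tendsto_vec_nth assms(1))+
  moreover have "Mf k $ i $ j = Mf k $ j $ i" for k using assms(2) sym_mat_iff_nth by blast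
  ultimately show "M $ i $ j = M $ j $ i" using LIMSEQ_unique by simp
qed

lemma tendsto_aug_lag:
  assumes "Xf \<longlonglongrightarrow> X" "Yf \<longlonglongrightarrow> Y" "Lf \<longlonglongrightarrow> Lam" and "\<And>x. isCont g x"
  shows "(\<lambda>k. aug_lag A lam g rho (Xf k) (Yf k) (Lf k)) \<longlonglongrightarrow> aug_lag A lam g rho X Y Lam"
proof -
  have "(\<lambda>k. g (Yf k $ a $ b)) \<longlonglongrightarrow> g (Y $ a $ b)" for a b
    by (intro isCont_tendsto_compose[OF assms(4)] tendsto_vec_nth assms(2))
  then show ?thesis
    unfolding aug_lag_def frob_norm_sq_eq_inner frob_inner_eq_inner by (intro tendsto_intros assms)
qed

section \<open>The augmented Lagrangian and the Y-step\<close>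

lemma aug_lag_projection:
  fixes V :: "real^'k^'n"
  assumes "transpose V ** V = mat 1"
  shows "aug_lag A lam g rho (V ** transpose V) Y Lam
     = A \<bullet> A + real CARD('k) + lam * (\<Sum>i\<in>UNIV. \<Sum>j\<in>UNIV. g (Y$i$j)) + rho / 2 * (real CARD('k) + Y \<bullet> Y)
       - Lam \<bullet> Y - (2 *\<^sub>R A + rho *\<^sub>R Y - Lam) \<bullet> (V ** transpose V)"
  unfolding aug_lag_def frob_norm_sq_eq_inner frob_inner_eq_inner
  using projection_inner_self[OF assms]
  by (simp add: inner_diff_left inner_diff_right inner_add_left inner_commute algebra_simps)

definition aug_lag_entry ::
  "real \<Rightarrow> (real \<Rightarrow> real) \<Rightarrow> real \<Rightarrow> real^'n^'n \<Rightarrow> real^'n^'n \<Rightarrow> 'n \<Rightarrow> 'n \<Rightarrow> real \<Rightarrow> real" where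
  "aug_lag_entry lam g rho X Lam a b y = lam * g y + rho / 2 * (X$a$b - y)^2 + Lam$a$b * (X$a$b - y)"

lemma aug_lag_entrywise:
  "aug_lag A lam g rho X Y Lam
     = frob_norm_sq (A - X) + (\<Sum>a\<in>UNIV. \<Sum>b\<in>UNIV. aug_lag_entry lam g rho X Lam a b (Y$a$b))"
  unfolding aug_lag_def frob_norm_sq_def frob_inner_def aug_lag_entry_def
  by (simp add: sum.distrib sum_distrib_left)

lemma sum_sum_update_entry:
  fixes h :: "'n::finite \<Rightarrow> 'n \<Rightarrow> real \<Rightarrow> real"
  shows "(\<Sum>a\<in>UNIV. \<Sum>b\<in>UNIV. h a b ((\<chi> a b. if a = i \<and> b = j then y else M$a$b)$a$b))
       = (\<Sum>a\<in>UNIV. \<Sum>b\<in>UNIV. h a b (M$a$b)) - h i j (M$i$j) + h i j y"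
proof -
  have "h a b ((\<chi> a b. if a = i \<and> b = j then y else M$a$b)$a$b)
      = h a b (M$a$b) + (if b = j then (if a = i then h i j y - h i j (M$i$j) else 0) else 0)" for a b
    by auto
  then show ?thesis by (simp add: sum.distrib)
qed

lemma aug_lag_min_first_order:
  assumes deriv: "\<And>x. (g has_real_derivative gd x) (at x)"
    and min: "\<And>Y'. aug_lag A lam g rho X Y Lam \<le> aug_lag A lam g rho X Y' Lam"
  shows "lam * gd (Y$i$j) = Lam$i$j + rho * (X$i$j - Y$i$j)"
proof -
  define h where "h = aug_lag_entry lam g rho X Lam i j"
  have "h (Y$i$j) \<le> h y" for y
    using min[of "\<chi> a b. if a = i \<and> b = j then y else Y$a$b"]
    unfolding aug_lag_entrywise sum_sum_update_entry h_def by simp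
  moreover have "DERIV h (Y$i$j) :> lam * gd (Y$i$j) + rho / 2 * (2 * (X$i$j - Y$i$j) * (-1)) + Lam$i$j * (-1)"
    unfolding h_def aug_lag_entry_def by (auto intro!: derivative_eq_intros deriv simp: field_simps)
  ultimately have "lam * gd (Y$i$j) + rho / 2 * (2 * (X$i$j - Y$i$j) * (-1)) + Lam$i$j * (-1) = 0"
    using DERIV_local_min[OF _ zero_less_one] by blast
  then show ?thesis by (simp add: algebra_simps)
qed

lemma aug_lag_entry_quadratic_growth:
  assumes g: "in_class_G g gd l" and lam: "lam > 0"
    and stationary: "lam * gd y0 = Lam$a$b + rho * (X$a$b - y0)"
  shows "aug_lag_entry lam g rho X Lam a b y - aug_lag_entry lam g rho X Lam a b y0 \<ge> rho / 2 * (y - y0)^2"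
proof -
  have "g y - g y0 \<ge> gd y0 * (y - y0)"
    using g by (intro convex_on_imp_above_tangent) (auto simp: in_class_G_def)
  then have "lam * (g y - g y0) \<ge> (Lam$a$b + rho * (X$a$b - y0)) * (y - y0)"
    using lam stationary by (metis mult.assoc mult_le_cancel_left_pos)
  then show ?thesis unfolding aug_lag_entry_def by (simp add: algebra_simps power2_eq_square)
qed

lemma aug_lag_min_quadratic_growth:
  assumes g: "in_class_G g gd l" and lam: "lam > 0"
    and min: "\<And>Y'. aug_lag A lam g rho X Y Lam \<le> aug_lag A lam g rho X Y' Lam"
  shows "aug_lag A lam g rho X Y' Lam - aug_lag A lam g rho X Y Lam \<ge> rho / 2 * (norm (Y' - Y))^2"
proof -
  have deriv: "\<And>x. (g has_real_derivative gd x) (at x)" using g by (simp add: in_class_G_def)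
  have "(norm (Y' - Y))^2 = (\<Sum>a\<in>UNIV. \<Sum>b\<in>UNIV. (Y'$a$b - Y$a$b)^2)"
    by (simp add: power2_norm_eq_inner frob_norm_sq_def flip: frob_norm_sq_eq_inner)
  then have "rho / 2 * (norm (Y' - Y))^2 = (\<Sum>a\<in>UNIV. \<Sum>b\<in>UNIV. rho / 2 * (Y'$a$b - Y$a$b)^2)"
    by (simp only: sum_distrib_left)
  also have "\<dots> \<le> (\<Sum>a\<in>UNIV. \<Sum>b\<in>UNIV. aug_lag_entry lam g rho X Lam a b (Y'$a$b)
                                     - aug_lag_entry lam g rho X Lam a b (Y$a$b))"
    using aug_lag_entry_quadratic_growth[OF g lam aug_lag_min_first_order[OF deriv min]]
    by (intro sum_mono)
  also have "\<dots> = aug_lag A lam g rho X Y' Lam - aug_lag A lam g rho X Y Lam"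
    unfolding aug_lag_entrywise by (simp add: sum_subtractf)
  finally show ?thesis .
qed

lemma lipschitz_plus_linear_inj:
  fixes gd :: "real \<Rightarrow> real"
  assumes lip: "\<And>a b. \<bar>gd a - gd b\<bar> \<le> l * \<bar>a - b\<bar>" and "l \<ge> 0"
    and lam: "lam > 0" and gt: "rho > lam * l"
    and eq: "lam * gd y1 + rho * y1 = lam * gd y2 + rho * y2"
  shows "y1 = y2"
proof -
  have "rho > 0" using gt lam \<open>l \<ge> 0\<close> mult_nonneg_nonneg[of lam l] by linarith
  have "rho * (y1 - y2) = lam * (gd y2 - gd y1)" using eq by (simp add: algebra_simps)
  then have "rho * \<bar>y1 - y2\<bar> = lam * \<bar>gd y2 - gd y1\<bar>"
    using lam \<open>rho > 0\<close> by (metis abs_mult abs_of_pos)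
  also have "\<dots> \<le> lam * (l * \<bar>y1 - y2\<bar>)" using lip[of y2 y1] lam by (simp add: abs_minus_commute)
  finally have "(rho - lam * l) * \<bar>y1 - y2\<bar> \<le> 0" by (simp add: algebra_simps)
  then show ?thesis using gt by (simp add: mult_le_0_iff)
qed

section \<open>Convergence of the ADMM iteration\<close>

locale admm_iteration =
  fixes A :: "real^'n^'n" and lam l rho :: real and g gd :: "real \<Rightarrow> real"
    and X Y Lam :: "nat \<Rightarrow> real^'n^'n" and U :: "nat \<Rightarrow> real^'k^'n"
  assumes A_sym: "sym_mat A" and K_lt_n: "CARD('k) < CARD('n)"
    and lam_pos: "lam > 0" and g_class: "in_class_G g gd l" and l_pos: "l > 0"
    and rho_def: "rho = 3 * lam * l"
    and Y0_sym: "sym_mat (Y 0)" and Lam0_sym: "sym_mat (Lam 0)"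
    and X_step: "\<And>k. top_eigvecs (2 *\<^sub>R A + rho *\<^sub>R Y k - Lam k) (U k)"
    and X_eq: "\<And>k. X (Suc k) = U k ** transpose (U k)"
    and Y_step: "\<And>k Y'. aug_lag A lam g rho (X (Suc k)) (Y (Suc k)) (Lam k)
                         \<le> aug_lag A lam g rho (X (Suc k)) Y' (Lam k)"
    and Lam_step: "\<And>k. Lam (Suc k) = Lam k + rho *\<^sub>R (X (Suc k) - Y (Suc k))"
begin

definition W :: "nat \<Rightarrow> real^'n^'n" where
  "W k = 2 *\<^sub>R A + rho *\<^sub>R Y k - Lam k"

definition L :: "nat \<Rightarrow> real" where
  "L k = aug_lag A lam g rho (X k) (Y k) (Lam k)"

lemma rho_pos: "rho > 0"
  using lam_pos l_pos rho_def by simp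

lemma g_deriv: "(g has_real_derivative gd x) (at x)"
  and gd_isCont: "isCont gd x"
  and gd_lipschitz: "\<bar>gd a - gd b\<bar> \<le> l * \<bar>a - b\<bar>"
  using g_class by (auto simp: in_class_G_def continuous_on_eq_continuous_at)

lemma Y_step_first_order:
  "lam * gd (Y (Suc k)$i$j) = Lam k$i$j + rho * (X (Suc k)$i$j - Y (Suc k)$i$j)"
  by (rule aug_lag_min_first_order[OF g_deriv Y_step])

lemma multiplier_eq: "Lam (Suc k) = lam *\<^sub>R entrywise gd (Y (Suc k))"
proof -
  have "Lam (Suc k) $ i $ j = lam * gd (Y (Suc k) $ i $ j)" for i j
    using Y_step_first_order[of k i j] unfolding Lam_step by simp
  then show ?thesis by (simp add: vec_eq_iff entrywise_def)
qed

lemma iterates_sym: "sym_mat (Y k) \<and> sym_mat (Lam k)"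
proof (induction k)
  case 0
  then show ?case using Y0_sym Lam0_sym by simp
next
  case (Suc k)
  have X_sym: "X (Suc k) $ i $ j = X (Suc k) $ j $ i" for i j
    unfolding X_eq mult_transpose_self_nth by (simp add: mult.commute)
  have Lam_sym: "Lam k $ i $ j = Lam k $ j $ i" for i j
    using Suc.IH sym_mat_iff_nth by blast
  have foc: "lam * gd (Y (Suc k)$i$j) + rho * Y (Suc k)$i$j = Lam k$i$j + rho * X (Suc k)$i$j" for i j
    using Y_step_first_order[of k i j] unfolding right_diff_distrib by linarith
  have "rho > lam * l" using lam_pos l_pos by (simp add: rho_def)
  moreover have "lam * gd (Y (Suc k)$i$j) + rho * Y (Suc k)$i$j
               = lam * gd (Y (Suc k)$j$i) + rho * Y (Suc k)$j$i" for i j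
    by (simp only: foc X_sym[of i j] Lam_sym[of i j])
  ultimately have "Y (Suc k) $ i $ j = Y (Suc k) $ j $ i" for i j
    by (rule lipschitz_plus_linear_inj[OF gd_lipschitz less_imp_le[OF l_pos] lam_pos])
  then show ?case
    by (simp add: sym_mat_iff_nth multiplier_eq entrywise_def)
qed

lemma W_sym: "transpose (W k) = W k"
  using iterates_sym[of k] A_sym by (simp add: W_def flip: sym_mat_def add: sym_mat_iff_nth)

lemma U_orthonormal: "transpose (U k) ** U k = mat 1"
  using X_step[of k] by (simp add: top_eigvecs_def)

lemma X_step_max:
  fixes V :: "real^'k^'n"
  assumes "transpose V ** V = mat 1"
  shows "W k \<bullet> (V ** transpose V) \<le> W k \<bullet> X (Suc k)"
proof -
  have top: "top_eigvecs (W k) (U k)" using X_step by (simp add: W_def)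
  obtain mu where eig: "\<And>j. W k *v column j (U k) = mu j *\<^sub>R column j (U k)"
    and mu_ge: "\<And>j. kth_eig (W k) CARD('k) \<le> mu j"
    and kth_le: "kth_eig (W k) (CARD('k) + 1) \<le> kth_eig (W k) CARD('k)"
    and compl: "\<And>x. \<forall>j. column j (U k) \<bullet> x = 0 \<Longrightarrow>
                  x \<bullet> (W k *v x) \<le> kth_eig (W k) (CARD('k) + 1) * (x \<bullet> x)"
    using top_eigvecs_spectral[OF W_sym top K_lt_n] by blast
  have mu_ge_next: "kth_eig (W k) (CARD('k) + 1) + 0 \<le> mu j" for j using mu_ge[of j] kth_le by simp
  from ky_fan_gap[OF W_sym U_orthonormal assms eig compl mu_ge_next] show ?thesis by (simp add: X_eq)
qed

lemma X_step_decrease: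
  "aug_lag A lam g rho (X (Suc (Suc k))) (Y (Suc k)) (Lam (Suc k)) \<le> L (Suc k)"
proof -
  have "W (Suc k) \<bullet> X (Suc k) \<le> W (Suc k) \<bullet> X (Suc (Suc k))"
    using X_step_max[OF U_orthonormal[of k], of "Suc k"] by (simp add: X_eq)
  then show ?thesis by (simp add: L_def X_eq aug_lag_projection[OF U_orthonormal] W_def)
qed

lemma Y_step_decrease:
  "aug_lag A lam g rho (X (Suc k)) (Y (Suc k)) (Lam k) + rho / 2 * (norm (Y (Suc k) - Y k))^2
     \<le> aug_lag A lam g rho (X (Suc k)) (Y k) (Lam k)"
  using aug_lag_min_quadratic_growth[OF g_class lam_pos Y_step[of k], where Y' = "Y k"]
  by (simp add: norm_minus_commute)

lemma multiplier_step_increase: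
  "L (Suc k) = aug_lag A lam g rho (X (Suc k)) (Y (Suc k)) (Lam k) + (norm (Lam (Suc k) - Lam k))^2 / rho"
proof -
  define D where "D = X (Suc k) - Y (Suc k)"
  have "Lam (Suc k) - Lam k = rho *\<^sub>R D" by (simp add: Lam_step D_def)
  then have "Lam (Suc k) \<bullet> D = Lam k \<bullet> D + (norm (Lam (Suc k) - Lam k))^2 / rho"
    using rho_pos by (simp add: Lam_step inner_add_left dot_square_norm power2_eq_square)
  then show ?thesis by (simp add: L_def aug_lag_def frob_inner_eq_inner D_def)
qed

lemma multiplier_diff_le:
  "norm (Lam (Suc (Suc k)) - Lam (Suc k)) \<le> lam * l * norm (Y (Suc (Suc k)) - Y (Suc k))"
proof -
  have "norm (Lam (Suc (Suc k)) - Lam (Suc k))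
      = lam * norm (entrywise gd (Y (Suc (Suc k))) - entrywise gd (Y (Suc k)))"
    using lam_pos by (simp add: multiplier_eq flip: scaleR_diff_right)
  also have "\<dots> \<le> lam * (l * norm (Y (Suc (Suc k)) - Y (Suc k)))"
    using norm_entrywise_diff_le[OF gd_lipschitz less_imp_le[OF l_pos]] lam_pos by simp
  finally show ?thesis by simp
qed

text \<open>The Y-step gains \<open>\<rho>/2 \<parallel>\<Delta>Y\<parallel>\<^sup>2\<close> and the multiplier step loses at most
  \<open>(\<lambda>\<ell>)\<^sup>2/\<rho> \<parallel>\<Delta>Y\<parallel>\<^sup>2\<close>; with \<open>\<rho> = 3\<lambda>\<ell>\<close> the net gain is \<open>7/6 \<lambda>\<ell> \<parallel>\<Delta>Y\<parallel>\<^sup>2\<close>.\<close>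
lemma sufficient_decrease:
  "L (Suc (Suc k)) + 7/6 * (lam * l) * (norm (Y (Suc (Suc k)) - Y (Suc k)))^2 \<le> L (Suc k)"
proof -
  define d where "d = norm (Y (Suc (Suc k)) - Y (Suc k))"
  have "(norm (Lam (Suc (Suc k)) - Lam (Suc k)))^2 \<le> (lam * l * d)^2"
    using multiplier_diff_le[of k] by (simp add: d_def power_mono)
  then have "(norm (Lam (Suc (Suc k)) - Lam (Suc k)))^2 / rho \<le> (lam * l * d)^2 / rho"
    using rho_pos by (simp add: divide_right_mono)
  then have "L (Suc (Suc k)) \<le> aug_lag A lam g rho (X (Suc (Suc k))) (Y (Suc k)) (Lam (Suc k))
                               - rho / 2 * d^2 + (lam * l * d)^2 / rho"
    using multiplier_step_increase[of "Suc k"] Y_step_decrease[of "Suc k"] by (simp add: d_def)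
  also have "\<dots> \<le> L (Suc k) - (rho / 2 - (lam * l)^2 / rho) * d^2"
    using X_step_decrease[of k] by (simp add: algebra_simps power_mult_distrib)
  also have "rho / 2 - (lam * l)^2 / rho = 7/6 * (lam * l)"
    using lam_pos l_pos by (simp add: rho_def field_simps power2_eq_square)
  finally show ?thesis by (simp add: d_def)
qed

lemma L_antimono:
  assumes "1 \<le> m" "m \<le> n"
  shows "L n \<le> L m"
  using assms(2)
proof (induction n rule: dec_induct)
  case (step n)
  obtain k where n: "n = Suc k" using assms(1) step.hyps(1) by (cases n) auto
  have "0 \<le> 7/6 * (lam * l) * (norm (Y (Suc (Suc k)) - Y (Suc k)))^2"
    using lam_pos l_pos by simp
  then have "L (Suc n) \<le> L n" using sufficient_decrease[of k] unfolding n by linarith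
  then show ?case using step.IH by simp
qed simp

lemma sum_Y_diff_le:
  "7/6 * (lam * l) * (\<Sum>i<N. (norm (Y (Suc (Suc i)) - Y (Suc i)))^2) \<le> L 1 - L (Suc N)"
proof (induction N)
  case (Suc N)
  then show ?case using sufficient_decrease[of N] by (simp add: algebra_simps)
qed simp

end

locale admm_limit_point = admm_iteration A lam l rho g gd X Y Lam U
  for A :: "real^'n^'n" and lam l rho g gd X Y Lam and U :: "nat \<Rightarrow> real^'k^'n" +
  fixes r :: "nat \<Rightarrow> nat" and Xs Ys Lams :: "real^'n^'n"
  assumes r_mono: "strict_mono r"
    and X_lim: "(\<lambda>k. X (r k)) \<longlonglongrightarrow> Xs"
    and Y_lim: "(\<lambda>k. Y (r k)) \<longlonglongrightarrow> Ys"
    and Lam_lim: "(\<lambda>k. Lam (r k)) \<longlonglongrightarrow> Lams"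
begin

definition Ws :: "real^'n^'n" where
  "Ws = 2 *\<^sub>R A + rho *\<^sub>R Ys - Lams"

lemma L_ge_limit:
  assumes "1 \<le> m"
  shows "aug_lag A lam g rho Xs Ys Lams \<le> L m"
proof (rule LIMSEQ_le_const2)
  show "(\<lambda>k. L (r k)) \<longlonglongrightarrow> aug_lag A lam g rho Xs Ys Lams"
    unfolding L_def by (rule tendsto_aug_lag[OF X_lim Y_lim Lam_lim DERIV_isCont[OF g_deriv]])
  show "\<exists>N. \<forall>k\<ge>N. L (r k) \<le> L m"
    using L_antimono[OF assms] seq_suble[OF r_mono] le_trans by blast
qed

lemma Y_diff_tendsto_zero: "(\<lambda>k. Y (Suc k) - Y k) \<longlonglongrightarrow> 0"
proof -
  define d where "d i = (norm (Y (Suc (Suc i)) - Y (Suc i)))^2" for i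
  define c where "c = 7/6 * (lam * l)"
  have c_pos: "c > 0" using lam_pos l_pos by (simp add: c_def)
  have "summable d"
  proof (rule summableI_nonneg_bounded)
    fix N
    have "c * sum d {..<N} \<le> L 1 - aug_lag A lam g rho Xs Ys Lams"
      using sum_Y_diff_le[of N] L_ge_limit[of "Suc N"] by (simp add: c_def d_def)
    then show "sum d {..<N} \<le> (L 1 - aug_lag A lam g rho Xs Ys Lams) / c"
      using c_pos by (simp add: field_simps)
  qed (simp add: d_def)
  then have "(\<lambda>i. sqrt (d i)) \<longlonglongrightarrow> 0"
    using tendsto_real_sqrt[OF summable_LIMSEQ_zero] by fastforce
  moreover have "sqrt (d i) = norm (Y (Suc (Suc i)) - Y (Suc i))" for i by (simp add: d_def)
  ultimately have "(\<lambda>i. Y (Suc (Suc i)) - Y (Suc i)) \<longlonglongrightarrow> 0"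
    by (simp add: tendsto_norm_zero_iff)
  then show ?thesis by (rule filterlim_sequentially_Suc[THEN iffD1])
qed

lemma Lam_diff_tendsto_zero: "(\<lambda>k. Lam (Suc k) - Lam k) \<longlonglongrightarrow> 0"
proof -
  have "(\<lambda>k. Y (Suc (Suc k)) - Y (Suc k)) \<longlonglongrightarrow> 0"
    using Y_diff_tendsto_zero by (rule filterlim_sequentially_Suc[THEN iffD2])
  then have "(\<lambda>k. lam * l * norm (Y (Suc (Suc k)) - Y (Suc k))) \<longlonglongrightarrow> 0"
    by (intro tendsto_mult_right_zero tendsto_norm_zero)
  then have "(\<lambda>k. Lam (Suc (Suc k)) - Lam (Suc k)) \<longlonglongrightarrow> 0"
    by (rule Lim_null_comparison[OF always_eventually, rotated]) (rule allI, rule multiplier_diff_le)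
  then show ?thesis by (rule filterlim_sequentially_Suc[THEN iffD1])
qed

lemma X_minus_Y_tendsto_zero: "(\<lambda>k. X k - Y k) \<longlonglongrightarrow> 0"
proof -
  have "X (Suc k) - Y (Suc k) = (1 / rho) *\<^sub>R (Lam (Suc k) - Lam k)" for k
    using rho_pos by (simp add: Lam_step)
  then have "(\<lambda>k. X (Suc k) - Y (Suc k)) \<longlonglongrightarrow> 0"
    using tendsto_scaleR[OF tendsto_const Lam_diff_tendsto_zero, of "1 / rho"] by simp
  then show ?thesis by (rule filterlim_sequentially_Suc[THEN iffD1])
qed

lemma subseq_tendsto_zero:
  "f \<longlonglongrightarrow> 0 \<Longrightarrow> (\<lambda>j. f (r j)) \<longlonglongrightarrow> (0 :: real^'n^'n)"
  using LIMSEQ_subseq_LIMSEQ[OF _ r_mono] by (simp add: o_def)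

lemma limit_X_eq_Y: "Xs = Ys"
proof -
  have "(\<lambda>j. X (r j) - Y (r j)) \<longlonglongrightarrow> Xs - Ys" by (intro tendsto_intros X_lim Y_lim)
  then show ?thesis
    using LIMSEQ_unique subseq_tendsto_zero[OF X_minus_Y_tendsto_zero] by fastforce
qed

lemma Y_shifted_lim: "(\<lambda>j. Y (Suc (r j))) \<longlonglongrightarrow> Ys"
  using tendsto_add[OF Y_lim subseq_tendsto_zero[OF Y_diff_tendsto_zero]] by simp

lemma Lam_shifted_lim: "(\<lambda>j. Lam (Suc (r j))) \<longlonglongrightarrow> Lams"
  using tendsto_add[OF Lam_lim subseq_tendsto_zero[OF Lam_diff_tendsto_zero]] by simp

lemma X_shifted_lim: "(\<lambda>j. X (Suc (r j))) \<longlonglongrightarrow> Ys"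
  using tendsto_add[OF Y_shifted_lim subseq_tendsto_zero[OF
        X_minus_Y_tendsto_zero[THEN filterlim_sequentially_Suc[THEN iffD2]]]]
  by simp

lemma limit_multiplier: "Lams = lam *\<^sub>R entrywise gd Ys"
proof -
  have "(\<lambda>j. Lam (Suc (r j))) \<longlonglongrightarrow> lam *\<^sub>R entrywise gd Ys"
    unfolding multiplier_eq by (intro tendsto_intros tendsto_entrywise[OF gd_isCont Y_shifted_lim])
  then show ?thesis using LIMSEQ_unique[OF Lam_shifted_lim] by blast
qed

lemma W_subseq_lim: "(\<lambda>j. W (r j)) \<longlonglongrightarrow> Ws"
  unfolding W_def Ws_def by (intro tendsto_intros Y_lim Lam_lim)

lemma Ws_sym: "transpose Ws = Ws"
  using sym_mat_limit[OF W_subseq_lim] W_sym by (simp add: sym_mat_def)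

lemma limit_inner_self: "Ys \<bullet> Ys = real CARD('k)"
proof -
  have "(\<lambda>j. X (Suc (r j)) \<bullet> X (Suc (r j))) \<longlonglongrightarrow> Ys \<bullet> Ys" by (intro tendsto_intros X_shifted_lim)
  moreover have "X (Suc (r j)) \<bullet> X (Suc (r j)) = real CARD('k)" for j
    unfolding X_eq by (rule projection_inner_self[OF U_orthonormal])
  ultimately show ?thesis by (simp add: LIMSEQ_const_iff)
qed

text \<open>Passing to the limit in the optimality of the X-step, \<open>Y\<^sup>*\<close> is a limit of rank-\<open>K\<close>
  projections that are at least as good as \<open>P = U\<^sup>* U\<^sup>*\<^sup>T\<close> for \<open>W\<^sup>*\<close>, while the spectral gap
  makes \<open>P\<close> beat any such projection by a multiple of the distance; hence \<open>Y\<^sup>* = P\<close>.\<close>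
lemma limit_eq_top_projection:
  fixes Us :: "real^'k^'n"
  assumes top: "top_eigvecs Ws Us" and gap: "kth_eig Ws (CARD('k) + 1) < kth_eig Ws CARD('k)"
  shows "Ys = Us ** transpose Us"
proof -
  define P where "P = Us ** transpose Us"
  define \<delta> where "\<delta> = kth_eig Ws CARD('k) - kth_eig Ws (CARD('k) + 1)"
  have oUs: "transpose Us ** Us = mat 1" using top by (simp add: top_eigvecs_def)
  obtain mu where eig: "\<And>j. Ws *v column j Us = mu j *\<^sub>R column j Us"
    and mu_ge: "\<And>j. kth_eig Ws CARD('k) \<le> mu j"
    and "kth_eig Ws (CARD('k) + 1) \<le> kth_eig Ws CARD('k)"
    and compl: "\<And>x. \<forall>j. column j Us \<bullet> x = 0 \<Longrightarrow> x \<bullet> (Ws *v x) \<le> kth_eig Ws (CARD('k) + 1) * (x \<bullet> x)"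
    using top_eigvecs_spectral[OF Ws_sym top K_lt_n] by blast
  have "kth_eig Ws (CARD('k) + 1) + \<delta> \<le> mu j" for j using mu_ge[of j] by (simp add: \<delta>_def)
  note gap_ineq = ky_fan_gap[OF Ws_sym oUs U_orthonormal eig compl this, folded P_def]
  have "Ws \<bullet> P \<le> Ws \<bullet> Ys"
  proof (rule LIMSEQ_le)
    show "(\<lambda>j. W (r j) \<bullet> P) \<longlonglongrightarrow> Ws \<bullet> P" by (intro tendsto_intros W_subseq_lim)
    show "(\<lambda>j. W (r j) \<bullet> X (Suc (r j))) \<longlonglongrightarrow> Ws \<bullet> Ys"
      by (intro tendsto_intros W_subseq_lim X_shifted_lim)
    show "\<exists>N. \<forall>j\<ge>N. W (r j) \<bullet> P \<le> W (r j) \<bullet> X (Suc (r j))"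
      unfolding P_def using X_step_max[OF oUs] by (intro exI allI impI)
  qed
  moreover have "Ws \<bullet> Ys + \<delta> * (real CARD('k) - P \<bullet> Ys) \<le> Ws \<bullet> P"
  proof (rule LIMSEQ_le_const2)
    show "(\<lambda>j. Ws \<bullet> X (Suc (r j)) + \<delta> * (real CARD('k) - P \<bullet> X (Suc (r j))))
            \<longlonglongrightarrow> Ws \<bullet> Ys + \<delta> * (real CARD('k) - P \<bullet> Ys)"
      by (intro tendsto_intros X_shifted_lim)
    show "\<exists>N. \<forall>j\<ge>N. Ws \<bullet> X (Suc (r j)) + \<delta> * (real CARD('k) - P \<bullet> X (Suc (r j))) \<le> Ws \<bullet> P"
      unfolding X_eq using gap_ineq by (intro exI allI impI)
  qed
  ultimately have "\<delta> * (real CARD('k) - P \<bullet> Ys) \<le> 0" by linarith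
  moreover have "\<delta> > 0" using gap by (simp add: \<delta>_def)
  ultimately have "real CARD('k) \<le> P \<bullet> Ys" by (simp add: mult_le_0_iff)
  moreover have "(Ys - P) \<bullet> (Ys - P) = Ys \<bullet> Ys - 2 * (P \<bullet> Ys) + P \<bullet> P"
    by (simp add: inner_diff_left inner_diff_right inner_commute)
  ultimately have "(Ys - P) \<bullet> (Ys - P) \<le> 0"
    using limit_inner_self projection_inner_self[OF oUs, folded P_def] by linarith
  then have "Ys - P = 0" by (meson inner_gt_zero_iff not_le)
  then show ?thesis unfolding P_def by simp
qed

lemma limit_KKT:
  fixes Us :: "real^'k^'n"
  assumes top: "top_eigvecs Ws Us" and gap: "kth_eig Ws (CARD('k) + 1) < kth_eig Ws CARD('k)"
  shows "\<exists>D :: real^'k^'k. diag_mat D \<and> (2 *\<^sub>R A - lam *\<^sub>R entrywise gd Xs) ** Us = Us ** D"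
proof -
  have oUs: "transpose Us ** Us = mat 1" using top by (simp add: top_eigvecs_def)
  obtain mu where eig: "\<And>j. Ws *v column j Us = mu j *\<^sub>R column j Us"
    using top by (auto simp: top_eigvecs_def)
  define D :: "real^'k^'k" where "D = (\<chi> i j. if i = j then mu j - rho else 0)"
  have KKT_matrix: "2 *\<^sub>R A - lam *\<^sub>R entrywise gd Xs = Ws - rho *\<^sub>R (Us ** transpose Us)"
    unfolding Ws_def using limit_multiplier limit_X_eq_Y limit_eq_top_projection[OF top gap] by simp
  have "((Ws - rho *\<^sub>R (Us ** transpose Us)) ** Us) $ a $ j = (Us ** D) $ a $ j" for a j
  proof -
    have "(Us ** transpose Us) *v column j Us = column j Us"
      by (simp add: mult_transpose_self_mult_vector col_proj_column[OF oUs])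
    then have "(Ws - rho *\<^sub>R (Us ** transpose Us)) *v column j Us = (mu j - rho) *\<^sub>R column j Us"
      by (simp add: matrix_vector_mult_diff_rdistrib eig scaleR_diff_left flip: scaleR_matrix_vector_assoc)
    then have "((Ws - rho *\<^sub>R (Us ** transpose Us)) ** Us) $ a $ j = (mu j - rho) * Us $ a $ j"
      by (simp add: matrix_mult_column_nth column_def)
    also have "\<dots> = (Us ** D) $ a $ j"
      unfolding matrix_matrix_mult_def D_def by (simp add: if_distrib cong: if_cong)
    finally show ?thesis .
  qed
  then have "(2 *\<^sub>R A - lam *\<^sub>R entrywise gd Xs) ** Us = Us ** D"
    unfolding KKT_matrix by (simp add: vec_eq_iff)
  moreover have "diag_mat D" by (simp add: diag_mat_def D_def)
  ultimately show ?thesis by blast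
qed

end

theorem theorem1:
  fixes A :: "real^'n^'n"
    and lam l rho :: real
    and g gd :: "real \<Rightarrow> real"
    and X Y Lam :: "nat \<Rightarrow> real^'n^'n"
    and Xs Ys Lams :: "real^'n^'n"
    and Us :: "real^'k^'n"
    and r :: "nat \<Rightarrow> nat"
  assumes A_sym: "sym_mat A"
    and K_lt_n: "CARD('k) < CARD('n)"
    and lam_pos: "lam > 0"
    and g_class: "in_class_G g gd l"
    and l_pos: "l > 0"
    and rho_def: "rho = 3 * lam * l"
    and Y0_sym: "sym_mat (Y 0)"
    and Lam0_sym: "sym_mat (Lam 0)"
    and X_step: "\<And>k. \<exists>Uh :: real^'k^'n.
                   top_eigvecs (2 *\<^sub>R A + rho *\<^sub>R Y k - Lam k) Uh \<and>
                   X (Suc k) = Uh ** transpose Uh"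
    and Y_step: "\<And>k Y'. aug_lag A lam g rho (X (Suc k)) (Y (Suc k)) (Lam k)
                         \<le> aug_lag A lam g rho (X (Suc k)) Y' (Lam k)"
    and Lam_step: "\<And>k. Lam (Suc k) = Lam k + rho *\<^sub>R (X (Suc k) - Y (Suc k))"
    and r_mono: "strict_mono r"
    and X_lim: "(\<lambda>k. X (r k)) \<longlonglongrightarrow> Xs"
    and Y_lim: "(\<lambda>k. Y (r k)) \<longlonglongrightarrow> Ys"
    and Lam_lim: "(\<lambda>k. Lam (r k)) \<longlonglongrightarrow> Lams"
    and gap: "kth_eig (2 *\<^sub>R A + rho *\<^sub>R Ys - Lams) CARD('k)
              > kth_eig (2 *\<^sub>R A + rho *\<^sub>R Ys - Lams) (CARD('k) + 1)"
    and Us_eig: "top_eigvecs (2 *\<^sub>R A + rho *\<^sub>R Ys - Lams) Us"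
  shows "Xs = Ys \<and> Ys = Us ** transpose Us \<and>
         (\<exists>D :: real^'k^'k. diag_mat D \<and>
            (2 *\<^sub>R A - lam *\<^sub>R (\<chi> i j. gd (Xs$i$j))) ** Us = Us ** D) \<and>
         transpose Us ** Us = mat 1"
proof -
  obtain U :: "nat \<Rightarrow> real^'k^'n"
    where U: "\<And>k. top_eigvecs (2 *\<^sub>R A + rho *\<^sub>R Y k - Lam k) (U k) \<and> X (Suc k) = U k ** transpose (U k)"
    using X_step by metis
  interpret admm_limit_point A lam l rho g gd X Y Lam U r Xs Ys Lams
    using A_sym K_lt_n lam_pos g_class l_pos rho_def Y0_sym Lam0_sym U Y_step Lam_step
      r_mono X_lim Y_lim Lam_lim
    by unfold_locales auto
  have top: "top_eigvecs Ws Us" and gap_Ws: "kth_eig Ws (CARD('k) + 1) < kth_eig Ws CARD('k)"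
    using Us_eig gap by (simp_all add: Ws_def)
  then show ?thesis
    using limit_X_eq_Y limit_eq_top_projection limit_KKT
    by (simp add: entrywise_def top_eigvecs_def)
qed

end
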